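(* Assume $\frac1{\alpha^2}\ge\frac45+\mu$ and $\beta^2\le\frac43-\mu$ for a constant $\mu>0$. There is $a_0>0$ depending only on $S$ and $\mu$ such that for all $0<a\le\min(a_0,\lambda/2)$ there is a constant $c^*$ depending only on $a$ and $\mu$ such that for every $t\ge0$, $$\mathbb E\left[\Gamma(x^s(t+1))\,\middle|\,x^s(t)\right]\le\left(1-\zeta\frac aN\right)\Gamma(x^s(t))+c^*,\qquad \zeta=\min\left\{\frac\mu4,\frac1{60}\right\}.$$
   Context: Weighted balls into weighted bins: $n$ bins with positive integer weights $N_1,\dots,N_n$, $N=\sum_iN_i$; $\mathcal D$ on $[n]$ is $(\alpha,\beta)$-biased, i.e. $\frac{N_i}{\alpha N}\le\Pr_{\mathcal D}[i]\le\frac{\beta N_i}{N}$. Ball weights $w(t)$ are i.i.d. from $\mathcal W$ on $[0,\infty)$ with $\mathbb E[\mathcal W]=1$ and $M(z)=\mathbb E[e^{z\mathcal W}]$ finite at $z=\lambda$ for some $\lambda>0$; $S\ge1$ is a constant with $M''(z)\le2S$ for all $|z|<\lambda/2$. Each round two bins are sampled independently from $\mathcal D$ and the ball goes to the sampled bin with smaller value $v_i(t-1)=w_i(t-1)/N_i$. Slot formulation: bin $i$ consists of $N_i$ unit slots; the normalized slot vector $x^s(t)\in\mathbb R^N$ has, for each slot of bin $i$, the entry $v_i(t)-\frac1N\sum_{t'\le t}w(t')$, indexed so that $x^s_1(t)\ge\dots\ge x^s_N(t)$. $\Phi(y)=\sum_je^{ay_j}$, $\Psi(y)=\sum_je^{-ay_j}$,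 $\Gamma=\Phi+\Psi$. *)

theory Defs
  imports "HOL-Probability.Probability"
begin

text \<open>Bins are indexed by 0..n-1; bin i has positive integer weight Nw i;
  w i is the current load (total ball weight) of bin i.\<close>

definition total_bin_weight :: "nat \<Rightarrow> (nat \<Rightarrow> nat) \<Rightarrow> nat" where
  "total_bin_weight n Nw = (\<Sum>i<n. Nw i)"

definition bin_value :: "(nat \<Rightarrow> nat) \<Rightarrow> (nat \<Rightarrow> real) \<Rightarrow> nat \<Rightarrow> real" where
  "bin_value Nw w i = w i / real (Nw i)"

definition norm_value :: "nat \<Rightarrow> (nat \<Rightarrow> nat) \<Rightarrow> (nat \<Rightarrow> real) \<Rightarrow> nat \<Rightarrow> real" where
  "norm_value n Nw w i = bin_value Nw w i - (\<Sum>k<n. w k) / real (total_bin_weight n Nw)"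

definition slot_vector :: "nat \<Rightarrow> (nat \<Rightarrow> nat) \<Rightarrow> (nat \<Rightarrow> real) \<Rightarrow> real list" where
  "slot_vector n Nw w =
     rev (sort (concat (map (\<lambda>i. replicate (Nw i) (norm_value n Nw w i)) [0..<n])))"

definition Phi :: "real \<Rightarrow> real list \<Rightarrow> real" where
  "Phi a ys = sum_list (map (\<lambda>y. exp (a * y)) ys)"

definition Psi :: "real \<Rightarrow> real list \<Rightarrow> real" where
  "Psi a ys = sum_list (map (\<lambda>y. exp (- a * y)) ys)"

definition Gamma :: "real \<Rightarrow> real list \<Rightarrow> real" where
  "Gamma a ys = Phi a ys + Psi a ys"

definition is_bin_dist :: "nat \<Rightarrow> (nat \<Rightarrow> real) \<Rightarrow> bool" where
  "is_bin_dist n p \<longleftrightarrow> (\<forall>i<n. 0 \<le> p i) \<and> (\<Sum>i<n. p i) = 1"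

definition biased :: "nat \<Rightarrow> (nat \<Rightarrow> nat) \<Rightarrow> (nat \<Rightarrow> real) \<Rightarrow> real \<Rightarrow> real \<Rightarrow> bool" where
  "biased n Nw p \<alpha> \<beta> \<longleftrightarrow>
     (\<forall>i<n. real (Nw i) / (\<alpha> * real (total_bin_weight n Nw)) \<le> p i
          \<and> p i \<le> \<beta> * real (Nw i) / real (total_bin_weight n Nw))"

definition chosen_bin :: "(nat \<Rightarrow> nat) \<Rightarrow> (nat \<Rightarrow> real) \<Rightarrow> (nat \<Rightarrow> nat \<Rightarrow> bool) \<Rightarrow> nat \<Rightarrow> nat \<Rightarrow> nat" where
  "chosen_bin Nw w tb i j =
     (if bin_value Nw w i < bin_value Nw w j then i
      else if bin_value Nw w j < bin_value Nw w i then j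
      else if tb i j then i else j)"

definition add_ball :: "(nat \<Rightarrow> real) \<Rightarrow> nat \<Rightarrow> real \<Rightarrow> (nat \<Rightarrow> real)" where
  "add_ball w k x = w(k := w k + x)"

text \<open>E[Gamma(x^s(t+1)) | state at time t], where the state is the load vector w\<close>
definition expected_next_Gamma ::
  "real \<Rightarrow> nat \<Rightarrow> (nat \<Rightarrow> nat) \<Rightarrow> (nat \<Rightarrow> real) \<Rightarrow> (nat \<Rightarrow> nat \<Rightarrow> bool) \<Rightarrow> real measure
     \<Rightarrow> (nat \<Rightarrow> real) \<Rightarrow> real" where
  "expected_next_Gamma a n Nw p tb W w =
     (\<Sum>i<n. \<Sum>j<n. p i * p j *
        (\<integral>x. Gamma a (slot_vector n Nw (add_ball w (chosen_bin Nw w tb i j) x)) \<partial>W))"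

definition mgf :: "real measure \<Rightarrow> real \<Rightarrow> real" where
  "mgf W z = (\<integral>x. exp (z * x) \<partial>W)"

definition weight_dist :: "real measure \<Rightarrow> real \<Rightarrow> real \<Rightarrow> bool" where
  "weight_dist W lam S \<longleftrightarrow>
     prob_space W \<and> sets W = sets borel \<and> (AE x in W. 0 \<le> x)
     \<and> integrable W (\<lambda>x. x) \<and> (\<integral>x. x \<partial>W) = 1
     \<and> lam > 0 \<and> integrable W (\<lambda>x. exp (lam * x))
     \<and> (\<forall>z. \<bar>z\<bar> < lam / 2 \<longrightarrow> deriv (deriv (mgf W)) z \<le> 2 * S)"

end

theory Submission
  imports Defs
begin

text \<open>
  Write \<open>y j\<close> for the normalized value of bin \<open>j\<close>, \<open>g j = exp (a y j) - exp (-a y j)\<close> and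
  \<open>\<pi> j = N j / N\<close>. A ball of weight \<open>x\<close> in bin \<open>k\<close> moves \<open>y j\<close> by \<open>x ([j = k] / N j - 1 / N)\<close>;
  with \<open>M z \<le> 1 + z + S z\<^sup>2\<close> (Taylor's theorem and the bound on \<open>M''\<close>) the expected potential
  becomes at most \<open>\<Gamma> - a \<Sigma> \<pi> j g j + a g k + O (S a\<^sup>2 \<Gamma> / N)\<close>. Since \<open>g\<close> increases with the bin
  value, two choices replace \<open>g k\<close> by \<open>min (g i) (g j) = (g i + g j - \<bar>g i - g j\<bar>) / 2\<close>.
  The bias hypotheses keep \<open>p\<close> within a factor \<open>1 \<plusminus> 1/6\<close> of \<open>\<pi>\<close> and give
  \<open>p i p j \<ge> 4/5 \<pi> i \<pi> j\<close>; so with \<open>D = \<Sigma> \<pi> i \<pi> j \<bar>g i - g j\<bar>\<close> the first-order terms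
  lose at most \<open>D / 6\<close> to the bias and gain \<open>2 D / 5\<close> from the minimum. A convexity argument
  for the centred vector \<open>a y\<close>, split at a lower quartile, gives \<open>D \<ge> (\<Gamma> / N - 2) / 2\<close>,
  and the drift \<open>-(7/30) a D\<close> absorbs the second-order error once \<open>40 S a \<le> 1\<close>.
\<close>

section \<open>Exponential moments of the ball weight\<close>

lemma exp_minus_one_minus_le:
  fixes u :: real
  shows "exp u - 1 - u \<le> u\<^sup>2 * exp \<bar>u\<bar>"
proof -
  obtain t where t: "\<bar>t\<bar> \<le> \<bar>u\<bar>" and eq: "exp u = (\<Sum>m<2. u ^ m / fact m) + exp t / fact 2 * u ^ 2"
    using Maclaurin_exp_le[of u 2] by blast
  have "exp u - 1 - u = exp t / 2 * u\<^sup>2" using eq by (simp add: numeral_2_eq_2)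
  also have "\<dots> \<le> exp \<bar>u\<bar> * u\<^sup>2"
  proof (intro mult_right_mono)
    have "t \<le> \<bar>u\<bar>" using t abs_ge_self[of t] by linarith
    then have "exp t \<le> exp \<bar>u\<bar>" by simp
    then show "exp t / 2 \<le> exp \<bar>u\<bar>" using exp_gt_zero[of t] by linarith
  qed simp
  finally show ?thesis by (simp add: mult.commute)
qed

lemma has_field_derivative_if_quadratic_remainder:
  fixes f :: "real \<Rightarrow> real"
  assumes "d > 0" and remainder: "\<And>h. \<bar>h\<bar> \<le> d \<Longrightarrow> \<bar>f (t + h) - f t - h * L\<bar> \<le> K * h\<^sup>2"
  shows "(f has_field_derivative L) (at t)"
proof -
  have "((\<lambda>y. (f y - f t) / (y - t) - L) \<longlongrightarrow> 0) (at t)"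
  proof (rule Lim_null_comparison)
    have "\<forall>\<^sub>F y in at t. dist y t < d"
      using \<open>d > 0\<close> by (rule eventually_at_ball'[THEN eventually_mono]) (auto simp: dist_commute)
    moreover have "\<forall>\<^sub>F y in at t. y \<noteq> t" by (simp add: eventually_at_filter)
    ultimately show "\<forall>\<^sub>F y in at t. norm ((f y - f t) / (y - t) - L) \<le> \<bar>K\<bar> * \<bar>y - t\<bar>"
    proof eventually_elim
      case (elim y)
      then have "dist y t < d" "y \<noteq> t" by auto
      define h where "h = y - t"
      have "h \<noteq> 0" "\<bar>h\<bar> \<le> d" "y = t + h" using \<open>dist y t < d\<close> \<open>y \<noteq> t\<close> by (auto simp: h_def dist_real_def)
      have "(f y - f t) / (y - t) - L = (f (t + h) - f t - h * L) / h"
        using \<open>h \<noteq> 0\<close> unfolding \<open>y = t + h\<close> by (simp add: diff_divide_distrib)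
      then have "\<bar>(f y - f t) / (y - t) - L\<bar> = \<bar>f (t + h) - f t - h * L\<bar> / \<bar>h\<bar>"
        by (simp add: abs_divide)
      also have "\<dots> \<le> K * h\<^sup>2 / \<bar>h\<bar>"
        using remainder[OF \<open>\<bar>h\<bar> \<le> d\<close>] by (rule divide_right_mono) simp
      also have "\<dots> = K * \<bar>h\<bar>"
        using \<open>h \<noteq> 0\<close> by (simp add: power2_eq_square divide_simps)
      also have "\<dots> \<le> \<bar>K\<bar> * \<bar>h\<bar>" by (simp add: mult_right_mono)
      finally show ?case by (simp add: h_def)
    qed
    show "((\<lambda>y. \<bar>K\<bar> * \<bar>y - t\<bar>) \<longlongrightarrow> 0) (at t)"
      by (auto intro!: tendsto_eq_intros)
  qed
  then have "((\<lambda>y. (f y - f t) / (y - t)) \<longlongrightarrow> L) (at t)"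
    by (simp add: LIM_zero_iff)
  then show ?thesis by (simp add: has_field_derivative_iff)
qed

lemma weight_distD:
  assumes "weight_dist W lam S"
  shows "prob_space W" "sets W = sets borel" "AE x in W. 0 \<le> x" "(\<integral>x. x \<partial>W) = 1"
    "lam > 0" "integrable W (\<lambda>x. exp (lam * x))"
    "\<And>z. \<bar>z\<bar> < lam / 2 \<Longrightarrow> deriv (deriv (mgf W)) z \<le> 2 * S"
  using assms unfolding weight_dist_def by auto

lemma measurable_weight_dist:
  assumes "weight_dist W lam S" and "f \<in> borel_measurable borel"
  shows "f \<in> borel_measurable W"
  using measurable_cong_sets[of W borel borel borel] weight_distD(2)[OF assms(1)] assms(2) by simp

lemma power_le_exp:
  fixes x lam :: real
  assumes "0 \<le> x" "0 < lam" "k \<le> 3"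
  shows "x ^ k \<le> (12 / lam) ^ k * exp (lam * x / 4)"
proof -
  have "x \<le> (12 / lam) * exp (lam * x / 12)"
    using exp_gt_self[of "lam * x / 12"] assms by (simp add: field_simps)
  then have "x ^ k \<le> ((12 / lam) * exp (lam * x / 12)) ^ k"
    using assms by (intro power_mono) auto
  also have "\<dots> = (12 / lam) ^ k * exp (real k * (lam * x / 12))"
    by (simp only: power_mult_distrib exp_of_nat_mult)
  also have "\<dots> \<le> (12 / lam) ^ k * exp (lam * x / 4)"
  proof -
    have "real k * (lam * x / 12) \<le> 3 * (lam * x / 12)"
      using assms by (intro mult_right_mono) auto
    then have "exp (real k * (lam * x / 12)) \<le> exp (lam * x / 4)" by simp
    then show ?thesis by (rule mult_left_mono) (use assms in simp)
  qed
  finally show ?thesis .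
qed

lemma integrable_power_exp:
  assumes W: "weight_dist W lam S" and "k \<le> 3" and "s \<le> 3 * lam / 4"
  shows "integrable W (\<lambda>x. x ^ k * exp (s * x))"
proof (rule Bochner_Integration.integrable_bound)
  have "lam > 0" using weight_distD[OF W] by simp
  show "integrable W (\<lambda>x. (12 / lam) ^ k * exp (lam * x))"
    using weight_distD(6)[OF W] by simp
  show "(\<lambda>x. x ^ k * exp (s * x)) \<in> borel_measurable W"
    by (rule measurable_weight_dist[OF W]) measurable
  show "AE x in W. norm (x ^ k * exp (s * x)) \<le> norm ((12 / lam) ^ k * exp (lam * x))"
    using weight_distD(3)[OF W]
  proof eventually_elim
    case (elim x)
    have "s * x \<le> 3 * lam / 4 * x"
      using elim \<open>s \<le> 3 * lam / 4\<close> by (rule mult_right_mono[rotated])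
    then have "x ^ k * exp (s * x) \<le> (12 / lam) ^ k * exp (lam * x / 4) * exp (3 * lam / 4 * x)"
      using power_le_exp[OF elim \<open>lam > 0\<close> \<open>k \<le> 3\<close>] elim \<open>lam > 0\<close>
      by (intro mult_mono) auto
    also have "\<dots> = (12 / lam) ^ k * exp (lam * x)"
      by (simp add: mult.assoc flip: exp_add)
    finally show ?case using elim \<open>lam > 0\<close> by simp
  qed
qed

definition exp_moment :: "real measure \<Rightarrow> nat \<Rightarrow> real \<Rightarrow> real" where
  "exp_moment W k t = (\<integral>x. x ^ k * exp (t * x) \<partial>W)"

lemma exp_moment_remainder:
  assumes W: "weight_dist W lam S" and "k \<le> 1" and "\<bar>t\<bar> \<le> lam / 2" and "\<bar>h\<bar> \<le> lam / 4"
  shows "\<bar>exp_moment W k (t + h) - exp_moment W k t - h * exp_moment W (k + 1) t\<bar>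
    \<le> exp_moment W (k + 2) (3 * lam / 4) * h\<^sup>2"
proof -
  have "lam > 0" using weight_distD[OF W] by simp
  define D where "D x = x ^ k * exp (t * x) * (exp (h * x) - 1 - h * x)" for x
  define U where "U x = h\<^sup>2 * (x ^ (k + 2) * exp (3 * lam / 4 * x))" for x
  have int: "integrable W (\<lambda>x. x ^ k * exp ((t + h) * x))" "integrable W (\<lambda>x. x ^ k * exp (t * x))"
    "integrable W (\<lambda>x. x ^ (k + 1) * exp (t * x))" "integrable W (\<lambda>x. x ^ (k + 2) * exp (3 * lam / 4 * x))"
    by (rule integrable_power_exp[OF W]; use assms \<open>lam > 0\<close> in auto)+
  have D_eq: "D x = x ^ k * exp ((t + h) * x) - x ^ k * exp (t * x) - h * (x ^ (k + 1) * exp (t * x))" for x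
    by (simp add: D_def distrib_right exp_add algebra_simps)
  have remainder_eq: "exp_moment W k (t + h) - exp_moment W k t - h * exp_moment W (k + 1) t = (\<integral>x. D x \<partial>W)"
    unfolding D_eq exp_moment_def using int by simp
  have "AE x in W. 0 \<le> D x \<and> D x \<le> U x"
    using weight_distD(3)[OF W]
  proof eventually_elim
    case (elim x)
    have "0 \<le> exp (h * x) - 1 - h * x" using exp_ge_add_one_self[of "h * x"] by linarith
    then have "0 \<le> D x" unfolding D_def using elim by simp
    have "D x \<le> x ^ k * exp (t * x) * ((h * x)\<^sup>2 * exp (\<bar>h\<bar> * x))"
      unfolding D_def using elim exp_minus_one_minus_le[of "h * x"]
      by (intro mult_left_mono) (auto simp: abs_mult)
    also have "\<dots> = h\<^sup>2 * (x ^ (k + 2) * exp ((t + \<bar>h\<bar>) * x))"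
      by (simp add: exp_add power_add power_mult_distrib power2_eq_square distrib_right algebra_simps)
    also have "\<dots> \<le> U x"
    proof -
      have "t + \<bar>h\<bar> \<le> 3 * lam / 4" using assms by linarith
      then have "(t + \<bar>h\<bar>) * x \<le> 3 * lam / 4 * x" using elim by (rule mult_right_mono)
      then show ?thesis unfolding U_def using elim by (intro mult_left_mono) auto
    qed
    finally show ?case using \<open>0 \<le> D x\<close> by simp
  qed
  moreover have "integrable W D" "integrable W U"
    using int unfolding D_eq U_def by auto
  ultimately have "0 \<le> (\<integral>x. D x \<partial>W) \<and> (\<integral>x. D x \<partial>W) \<le> (\<integral>x. U x \<partial>W)"
    by (auto intro!: integral_nonneg_AE integral_mono_AE elim: AE_mp)
  moreover have "(\<integral>x. U x \<partial>W) = exp_moment W (k + 2) (3 * lam / 4) * h\<^sup>2"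
    unfolding U_def exp_moment_def by (simp add: mult.commute)
  ultimately show ?thesis unfolding remainder_eq by simp
qed

lemma exp_moment_has_derivative:
  assumes W: "weight_dist W lam S" and "k \<le> 1" and "\<bar>t\<bar> \<le> lam / 2"
  shows "(exp_moment W k has_field_derivative exp_moment W (k + 1) t) (at t)"
  using weight_distD(5)[OF W] exp_moment_remainder[OF assms]
  by (intro has_field_derivative_if_quadratic_remainder[where d = "lam / 4"
        and K = "exp_moment W (k + 2) (3 * lam / 4)"]) auto

lemma mgf_eq_exp_moment: "mgf W = exp_moment W 0"
  unfolding mgf_def exp_moment_def by auto

lemma second_exp_moment_le:
  assumes W: "weight_dist W lam S" and t: "\<bar>t\<bar> < lam / 2"
  shows "exp_moment W 2 t \<le> 2 * S"
proof -
  have eq: "exp_moment W 1 y = deriv (exp_moment W 0) y" if "y \<in> {- (lam / 2) <..< lam / 2}" for y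
  proof -
    have "\<bar>y\<bar> \<le> lam / 2" using that unfolding abs_le_iff by auto
    from exp_moment_has_derivative[OF W _ this, of 0] show ?thesis
      by (simp add: DERIV_imp_deriv)
  qed
  have "(exp_moment W 1 has_field_derivative exp_moment W 2 t) (at t)"
    using exp_moment_has_derivative[OF W, of 1 t] t by (simp add: numeral_2_eq_2)
  then have "(deriv (exp_moment W 0) has_field_derivative exp_moment W 2 t) (at t)"
  proof (rule has_field_derivative_transform_within_open[OF _ open_greaterThanLessThan _ eq])
    show "t \<in> {- (lam / 2) <..< lam / 2}" using t unfolding abs_less_iff by auto
  qed
  then have "deriv (deriv (mgf W)) t = exp_moment W 2 t"
    unfolding mgf_eq_exp_moment by (rule DERIV_imp_deriv)
  then show ?thesis using weight_distD(7)[OF W t] by simp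
qed

lemma mgf_le_quadratic:
  assumes W: "weight_dist W lam S" and z: "\<bar>z\<bar> \<le> lam / 2"
  shows "mgf W z \<le> 1 + z + S * z\<^sup>2"
proof (cases "z = 0")
  case True
  then show ?thesis using weight_distD(1)[OF W] by (simp add: mgf_def prob_space.prob_space)
next
  case False
  have lam: "0 < lam" using weight_distD(5)[OF W] .
  have derivs: "\<forall>m t. m < 2 \<and> - (lam / 2) \<le> t \<and> t \<le> lam / 2 \<longrightarrow>
      (exp_moment W m has_field_derivative exp_moment W (Suc m) t) (at t)"
    using exp_moment_has_derivative[OF W] by (auto simp: abs_le_iff)
  have "- (lam / 2) \<le> z" "z \<le> lam / 2" using z unfolding abs_le_iff by linarith+
  then obtain t where t: "if z < 0 then z < t \<and> t < 0 else 0 < t \<and> t < z"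
    and taylor: "exp_moment W 0 z = (\<Sum>m<2. exp_moment W m 0 / fact m * (z - 0) ^ m)
      + exp_moment W 2 t / fact 2 * (z - 0) ^ 2"
    using Taylor[of 2 "exp_moment W" "exp_moment W 0" "- (lam / 2)" "lam / 2" 0 z, OF _ refl derivs]
      lam False by auto
  have "exp_moment W 0 0 = 1" "exp_moment W 1 0 = 1"
    using weight_distD(1,4)[OF W] by (simp_all add: exp_moment_def prob_space.prob_space)
  moreover have "exp_moment W 2 t \<le> 2 * S"
    using second_exp_moment_le[OF W] t z by (simp split: if_splits)
  then have "exp_moment W 2 t * z\<^sup>2 \<le> 2 * S * z\<^sup>2" by (rule mult_right_mono) simp
  ultimately show ?thesis
    unfolding mgf_eq_exp_moment taylor by (simp add: numeral_2_eq_2)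
qed

section \<open>A deviation inequality for centred weights\<close>

lemma sum_filter_split:
  assumes "finite I"
  shows "sum f I = sum f {i\<in>I. P i} + sum f {i\<in>I. \<not> P i}"
  using assms by (subst sum.union_disjoint[symmetric]) (auto intro: sum.cong)

lemma double_sum_abs_diff_ge:
  fixes \<pi> v d :: "'i \<Rightarrow> real"
  assumes "finite I" and \<pi>: "\<And>i. i \<in> I \<Longrightarrow> 0 \<le> \<pi> i"
    and gap: "\<And>i j. i \<in> I \<Longrightarrow> j \<in> I \<Longrightarrow> P i \<Longrightarrow> \<not> P j \<Longrightarrow> d i \<le> \<bar>v i - v j\<bar>"
  shows "2 * sum \<pi> {j\<in>I. \<not> P j} * (\<Sum>i\<in>{i\<in>I. P i}. \<pi> i * d i)
    \<le> (\<Sum>i\<in>I. \<Sum>j\<in>I. \<pi> i * \<pi> j * \<bar>v i - v j\<bar>)"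
proof -
  define f where "f i j = (if P i \<and> \<not> P j then \<pi> i * \<pi> j * d i else 0)" for i j
  have f_sum: "(\<Sum>i\<in>I. \<Sum>j\<in>I. f i j) = sum \<pi> {j\<in>I. \<not> P j} * (\<Sum>i\<in>{i\<in>I. P i}. \<pi> i * d i)"
  proof -
    have "(\<Sum>j\<in>I. f i j) = (if P i then \<pi> i * d i * sum \<pi> {j\<in>I. \<not> P j} else 0)" for i
      unfolding f_def using \<open>finite I\<close>
      by (auto simp: sum.inter_filter sum_distrib_left mult_ac intro!: sum.cong)
    then show ?thesis using \<open>finite I\<close>
      by (simp add: sum.inter_filter[symmetric] sum_distrib_left sum_distrib_right mult_ac)
  qed
  have "f i j + f j i \<le> \<pi> i * \<pi> j * \<bar>v i - v j\<bar>" if "i \<in> I" "j \<in> I" for i j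
  proof -
    have "0 \<le> \<pi> i * \<pi> j" using \<pi> that by simp
    then show ?thesis
      using gap[OF that] gap[OF that(2,1)] unfolding f_def
      by (auto simp: abs_minus_commute) (metis mult.commute mult_right_mono)+
  qed
  then have "(\<Sum>i\<in>I. \<Sum>j\<in>I. f i j + f j i) \<le> (\<Sum>i\<in>I. \<Sum>j\<in>I. \<pi> i * \<pi> j * \<bar>v i - v j\<bar>)"
    by (intro sum_mono) auto
  moreover have "(\<Sum>i\<in>I. \<Sum>j\<in>I. f i j + f j i) = 2 * (\<Sum>i\<in>I. \<Sum>j\<in>I. f i j)"
    by (simp add: sum.distrib sum.swap[of "\<lambda>i j. f j i"])
  ultimately show ?thesis unfolding f_sum by simp
qed

lemma lower_quartile_exists:
  fixes \<pi> x :: "'i \<Rightarrow> real"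
  assumes "finite I" and "sum \<pi> I = 1"
  shows "\<exists>\<tau>. 1/4 \<le> sum \<pi> {j\<in>I. x j \<le> \<tau>} \<and> sum \<pi> {j\<in>I. x j < \<tau>} < 1/4"
proof -
  define T where "T = {t \<in> x ` I. 1/4 \<le> sum \<pi> {j\<in>I. x j \<le> t}}"
  have "finite T" unfolding T_def using \<open>finite I\<close> by auto
  have "I \<noteq> {}" using \<open>sum \<pi> I = 1\<close> by auto
  moreover have "{j\<in>I. x j \<le> Max (x ` I)} = I" using \<open>finite I\<close> by auto
  ultimately have "Max (x ` I) \<in> T"
    unfolding T_def using assms by auto
  then have "T \<noteq> {}" by auto
  define \<tau> where "\<tau> = Min T"
  have "\<tau> \<in> T" unfolding \<tau>_def using \<open>finite T\<close> \<open>T \<noteq> {}\<close> by simp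
  moreover have "sum \<pi> {j\<in>I. x j < \<tau>} < 1/4"
  proof (rule ccontr)
    assume big: "\<not> ?thesis"
    define L where "L = {j\<in>I. x j < \<tau>}"
    have "1/4 \<le> sum \<pi> L" using big unfolding L_def by simp
    then have "L \<noteq> {}" by auto
    have "finite L" unfolding L_def using \<open>finite I\<close> by auto
    define t where "t = Max (x ` L)"
    have "t \<in> x ` L" unfolding t_def using \<open>finite L\<close> \<open>L \<noteq> {}\<close> by simp
    then have "t < \<tau>" unfolding L_def by auto
    have "{j\<in>I. x j \<le> t} = L"
      using \<open>t < \<tau>\<close> \<open>finite L\<close> unfolding t_def L_def by (auto intro: Max_ge)
    then have "t \<in> T" unfolding T_def using \<open>1/4 \<le> sum \<pi> L\<close> \<open>t \<in> x ` L\<close> L_def by auto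
    then have "\<tau> \<le> t" unfolding \<tau>_def using \<open>finite T\<close> by simp
    then show False using \<open>t < \<tau>\<close> by simp
  qed
  ultimately show ?thesis unfolding T_def by blast
qed

lemma sum_exp_plus_exp_minus_le_parts:
  fixes \<pi> x :: "'i \<Rightarrow> real"
  assumes "finite I" and "\<And>i. i \<in> I \<Longrightarrow> 0 \<le> \<pi> i"
  shows "(\<Sum>i\<in>I. \<pi> i * (exp (x i) + exp (- x i) - 2))
    \<le> (\<Sum>i\<in>{i\<in>I. 0 < x i}. \<pi> i * (exp (x i) - 1)) + (\<Sum>i\<in>{i\<in>I. x i < 0}. \<pi> i * (exp (- x i) - 1))"
proof -
  have "\<pi> i * (exp (x i) + exp (- x i) - 2)
      \<le> (if 0 < x i then \<pi> i * (exp (x i) - 1) else 0) + (if x i < 0 then \<pi> i * (exp (- x i) - 1) else 0)"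
    if "i \<in> I" for i
    using assms(2)[OF that] by (cases "0 < x i"; cases "x i < 0") (auto intro!: mult_left_mono)
  then have "(\<Sum>i\<in>I. \<pi> i * (exp (x i) + exp (- x i) - 2))
      \<le> (\<Sum>i\<in>I. (if 0 < x i then \<pi> i * (exp (x i) - 1) else 0) + (if x i < 0 then \<pi> i * (exp (- x i) - 1) else 0))"
    by (rule sum_mono)
  also have "\<dots> = (\<Sum>i\<in>{i\<in>I. 0 < x i}. \<pi> i * (exp (x i) - 1)) + (\<Sum>i\<in>{i\<in>I. x i < 0}. \<pi> i * (exp (- x i) - 1))"
    by (simp add: sum.distrib sum.inter_filter[OF \<open>finite I\<close>])
  finally show ?thesis .
qed

lemma exp_tangent_le: "exp s * (1 + u - s) \<le> exp (u::real)"
proof -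
  have "exp s * (1 + (u - s)) \<le> exp s * exp (u - s)"
    using exp_ge_add_one_self[of "u - s"] by (intro mult_left_mono) auto
  then show ?thesis by (simp add: exp_diff add_diff_eq)
qed

lemma exp_triple_minus_one_ge: "3 * (exp t - 1) \<le> exp (3 * t) - (1::real)"
proof -
  have "exp (3 * t) = exp t ^ 3" by (metis exp_of_nat_mult of_nat_numeral)
  moreover have "0 \<le> (exp t - 1)\<^sup>2 * (exp t + 2)" by simp
  ultimately show ?thesis by (simp add: power2_eq_square power3_eq_cube algebra_simps)
qed

lemma sum_exp_minus_one_ge_of_small_mass:
  fixes \<pi> u :: "'i \<Rightarrow> real"
  assumes \<pi>: "\<And>j. j \<in> J \<Longrightarrow> 0 \<le> \<pi> j" and mass: "sum \<pi> J \<le> 1/4"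
    and mean: "3/4 * \<tau> \<le> (\<Sum>j\<in>J. \<pi> j * u j)"
  shows "3/4 * (exp \<tau> - 1) \<le> (\<Sum>j\<in>J. \<pi> j * (exp (u j) - 1))"
proof -
  define c where "c = exp (3 * \<tau>) * (1 - 3 * \<tau>) - 1"
  have "c \<le> 0" using exp_tangent_le[of "3 * \<tau>" 0] by (simp add: c_def)
  have "0 \<le> sum \<pi> J" using \<pi> by (rule sum_nonneg)
  have "3/4 * (exp \<tau> - 1) \<le> (exp (3 * \<tau>) - 1) / 4"
    using exp_triple_minus_one_ge[of \<tau>] by (simp add: field_simps)
  also have "\<dots> = c * (1/4) + exp (3 * \<tau>) * (3/4 * \<tau>)"
    by (simp add: c_def field_simps)
  also have "\<dots> \<le> c * sum \<pi> J + exp (3 * \<tau>) * (\<Sum>j\<in>J. \<pi> j * u j)"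
    using \<open>c \<le> 0\<close> mass mean by (intro add_mono mult_left_mono_neg mult_left_mono) auto
  also have "\<dots> = (\<Sum>j\<in>J. \<pi> j * (exp (3 * \<tau>) * (1 + u j - 3 * \<tau>) - 1))"
    by (simp add: c_def algebra_simps sum.distrib sum_distrib_left sum_distrib_right sum_subtractf)
  also have "\<dots> \<le> (\<Sum>j\<in>J. \<pi> j * (exp (u j) - 1))"
    using \<pi> exp_tangent_le by (intro sum_mono mult_left_mono) auto
  finally show ?thesis .
qed

lemma sum_exp_minus_one_le_threshold:
  fixes \<pi> x :: "'i \<Rightarrow> real"
  assumes "finite I" and \<pi>: "\<And>i. i \<in> I \<Longrightarrow> 0 \<le> \<pi> i" and "sum \<pi> I = 1" and "0 \<le> \<tau>"
  shows "(\<Sum>i\<in>{i\<in>I. 0 < x i}. \<pi> i * (exp (x i) - 1))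
    \<le> (exp \<tau> - 1) + (\<Sum>i\<in>{i\<in>I. \<tau> < x i}. \<pi> i * (exp (x i) - exp \<tau>))"
proof -
  have "(\<Sum>i\<in>{i\<in>I. 0 < x i}. \<pi> i * (exp (x i) - 1))
      \<le> (\<Sum>i\<in>{i\<in>I. 0 < x i}. \<pi> i * (exp \<tau> - 1) + (if \<tau> < x i then \<pi> i * (exp (x i) - exp \<tau>) else 0))"
  proof (rule sum_mono)
    fix i assume "i \<in> {i\<in>I. 0 < x i}"
    then have "0 \<le> \<pi> i" using \<pi> by simp
    then show "\<pi> i * (exp (x i) - 1)
        \<le> \<pi> i * (exp \<tau> - 1) + (if \<tau> < x i then \<pi> i * (exp (x i) - exp \<tau>) else 0)"
    proof (cases "\<tau> < x i")
      case False
      then have "exp (x i) - 1 \<le> exp \<tau> - 1" by simp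
      then show ?thesis using \<open>0 \<le> \<pi> i\<close> False by (simp add: mult_left_mono)
    qed (simp add: algebra_simps)
  qed
  also have "\<dots> = (exp \<tau> - 1) * sum \<pi> {i\<in>I. 0 < x i} + (\<Sum>i\<in>{i\<in>I. \<tau> < x i}. \<pi> i * (exp (x i) - exp \<tau>))"
    using \<open>finite I\<close> \<open>0 \<le> \<tau>\<close>
    by (simp add: sum.distrib sum_distrib_left mult.commute sum.inter_filter[symmetric] conj_commute
        cong: conj_cong)
  also have "(exp \<tau> - 1) * sum \<pi> {i\<in>I. 0 < x i} \<le> (exp \<tau> - 1) * 1"
    using \<open>0 \<le> \<tau>\<close> \<open>finite I\<close> \<pi> \<open>sum \<pi> I = 1\<close>
    by (intro mult_left_mono) (auto intro: order_trans[OF sum_mono2])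
  finally show ?thesis by simp
qed

lemma centred_neg_part_eq_pos_part:
  fixes \<pi> x :: "'i \<Rightarrow> real"
  assumes "finite I" and "(\<Sum>i\<in>I. \<pi> i * x i) = 0"
  shows "(\<Sum>i\<in>{i\<in>I. x i < 0}. \<pi> i * - x i) = (\<Sum>i\<in>{i\<in>I. 0 < x i}. \<pi> i * x i)"
proof -
  have "(\<Sum>i\<in>I. \<pi> i * x i) = (\<Sum>i\<in>I. (if 0 < x i then \<pi> i * x i else 0) + (if x i < 0 then \<pi> i * x i else 0))"
    by (rule sum.cong) auto
  then show ?thesis
    using assms by (simp add: sum.distrib sum.inter_filter sum_negf)
qed

lemma centred_neg_part_ge_quartile:
  fixes \<pi> x :: "'i \<Rightarrow> real"
  assumes fin: "finite I" and \<pi>: "\<And>i. i \<in> I \<Longrightarrow> 0 \<le> \<pi> i" and total: "sum \<pi> I = 1"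
    and centred: "(\<Sum>i\<in>I. \<pi> i * x i) = 0" and "0 < \<tau>" and quart: "sum \<pi> {j\<in>I. x j < \<tau>} < 1/4"
  shows "3/4 * \<tau> \<le> (\<Sum>i\<in>{i\<in>I. x i < 0}. \<pi> i * - x i)"
proof -
  have "3/4 * \<tau> \<le> sum \<pi> {j\<in>I. \<not> x j < \<tau>} * \<tau>"
    using sum_filter_split[OF fin, of \<pi> "\<lambda>j. x j < \<tau>"] total quart \<open>0 < \<tau>\<close>
    by (intro mult_right_mono) auto
  also have "\<dots> \<le> (\<Sum>i\<in>{j\<in>I. \<not> x j < \<tau>}. \<pi> i * x i)"
    unfolding sum_distrib_right using \<pi> by (intro sum_mono mult_left_mono) auto
  also have "\<dots> \<le> (\<Sum>i\<in>{i\<in>I. 0 < x i}. \<pi> i * x i)"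
    using fin \<pi> \<open>0 < \<tau>\<close> by (intro sum_mono2) auto
  also have "\<dots> = (\<Sum>i\<in>{i\<in>I. x i < 0}. \<pi> i * - x i)"
    using centred_neg_part_eq_pos_part[OF fin centred] by simp
  finally show ?thesis .
qed

definition exp_mean_difference :: "('i \<Rightarrow> real) \<Rightarrow> 'i set \<Rightarrow> ('i \<Rightarrow> real) \<Rightarrow> real" where
  "exp_mean_difference \<pi> I x = (\<Sum>i\<in>I. \<Sum>j\<in>I. \<pi> i * \<pi> j * \<bar>exp (x i) - exp (x j)\<bar>)"

lemma exp_mean_difference_ge:
  fixes \<pi> x :: "'i \<Rightarrow> real"
  assumes "finite I" and "\<And>i. i \<in> I \<Longrightarrow> 0 \<le> \<pi> i"
  shows "2 * sum \<pi> {j\<in>I. x j \<le> t} * (\<Sum>i\<in>{i\<in>I. t < x i}. \<pi> i * (exp (x i) - exp t))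
    \<le> exp_mean_difference \<pi> I x"
proof -
  have "2 * sum \<pi> {j\<in>I. \<not> t < x j} * (\<Sum>i\<in>{i\<in>I. t < x i}. \<pi> i * (exp (x i) - exp t))
    \<le> exp_mean_difference \<pi> I x"
    unfolding exp_mean_difference_def using assms by (rule double_sum_abs_diff_ge) auto
  then show ?thesis by (simp add: not_less)
qed

lemma centred_exp_deviation_le_skewed:
  fixes \<pi> x :: "'i \<Rightarrow> real"
  assumes fin: "finite I" and \<pi>: "\<And>i. i \<in> I \<Longrightarrow> 0 \<le> \<pi> i" and total: "sum \<pi> I = 1"
    and centred: "(\<Sum>i\<in>I. \<pi> i * x i) = 0" and skewed: "sum \<pi> {j\<in>I. x j \<le> 0} < 1/4"
  shows "(\<Sum>i\<in>I. \<pi> i * (exp (x i) + exp (- x i) - 2)) / 2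
    \<le> exp_mean_difference \<pi> I x + exp_mean_difference \<pi> I (\<lambda>i. - x i)"
proof -
  define A where "A = (\<Sum>i\<in>{i\<in>I. 0 < x i}. \<pi> i * (exp (x i) - 1))"
  define B where "B = (\<Sum>i\<in>{i\<in>I. x i < 0}. \<pi> i * (exp (- x i) - 1))"
  \<comment> \<open>At a lower quartile \<open>\<tau> > 0\<close> the negative part of the centred \<open>x\<close> has weighted size at least \<open>3\<tau>/4\<close>, so by
    convexity \<open>B\<close> pays for the part of \<open>A\<close> below \<open>exp \<tau>\<close>; the part above is charged to the spread.\<close>
  obtain \<tau> where quart: "1/4 \<le> sum \<pi> {j\<in>I. x j \<le> \<tau>}" "sum \<pi> {j\<in>I. x j < \<tau>} < 1/4"
    using lower_quartile_exists[OF fin total] by blast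
  have mono: "sum \<pi> {j\<in>I. P j} \<le> sum \<pi> {j\<in>I. Q j}" if "\<And>j. P j \<Longrightarrow> Q j" for P Q
    using fin \<pi> that by (intro sum_mono2) auto
  have "0 < \<tau>"
    using mono[of "\<lambda>j. x j \<le> \<tau>" "\<lambda>j. x j \<le> 0"] quart(1) skewed by force
  define X where "X = (\<Sum>i\<in>{i\<in>I. \<tau> < x i}. \<pi> i * (exp (x i) - exp \<tau>))"
  have "0 \<le> X" unfolding X_def using \<pi> by (intro sum_nonneg) auto
  have "0 \<le> B" unfolding B_def using \<pi> by (intro sum_nonneg) auto
  have "3/4 * \<tau> \<le> (\<Sum>i\<in>{i\<in>I. x i < 0}. \<pi> i * - x i)"
    using fin \<pi> total centred \<open>0 < \<tau>\<close> quart(2) by (rule centred_neg_part_ge_quartile)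
  then have "3/4 * (exp \<tau> - 1) \<le> B"
    unfolding B_def using \<pi> mono[of "\<lambda>j. x j < 0" "\<lambda>j. x j \<le> 0"] skewed
    by (intro sum_exp_minus_one_ge_of_small_mass) auto
  have "A \<le> (exp \<tau> - 1) + X"
    unfolding A_def X_def using \<open>0 < \<tau>\<close> by (intro sum_exp_minus_one_le_threshold fin \<pi> total) auto
  moreover have "X / 2 \<le> exp_mean_difference \<pi> I x"
    using exp_mean_difference_ge[where \<pi> = \<pi> and x = x and t = \<tau>, OF fin \<pi>] quart(1) \<open>0 \<le> X\<close> mult_right_mono[OF quart(1) \<open>0 \<le> X\<close>]
    unfolding X_def by linarith
  moreover have "3/2 * B \<le> exp_mean_difference \<pi> I (\<lambda>i. - x i)"
  proof -
    have "3/4 \<le> sum \<pi> {j\<in>I. - x j \<le> 0}"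
      using sum_filter_split[OF fin, of \<pi> "\<lambda>j. x j < 0"] mono[of "\<lambda>j. x j < 0" "\<lambda>j. x j \<le> 0"] total skewed
      by (simp add: not_less)
    then have "3/4 * B \<le> sum \<pi> {j\<in>I. - x j \<le> 0} * B" using \<open>0 \<le> B\<close> by (rule mult_right_mono)
    moreover have "2 * sum \<pi> {j\<in>I. - x j \<le> 0} * B \<le> exp_mean_difference \<pi> I (\<lambda>i. - x i)"
      using exp_mean_difference_ge[where \<pi> = \<pi> and x = "\<lambda>i. - x i" and t = 0, OF fin \<pi>]
      unfolding B_def by (simp add: neg_less_0_iff_less)
    ultimately show ?thesis by linarith
  qed
  moreover have "(\<Sum>i\<in>I. \<pi> i * (exp (x i) + exp (- x i) - 2)) \<le> A + B"
    unfolding A_def B_def by (rule sum_exp_plus_exp_minus_le_parts[OF fin \<pi>])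
  ultimately show ?thesis using \<open>3/4 * (exp \<tau> - 1) \<le> B\<close> \<open>0 \<le> B\<close> by argo
qed

lemma centred_exp_deviation_le:
  fixes \<pi> x :: "'i \<Rightarrow> real"
  assumes fin: "finite I" and \<pi>: "\<And>i. i \<in> I \<Longrightarrow> 0 \<le> \<pi> i" and total: "sum \<pi> I = 1"
    and centred: "(\<Sum>i\<in>I. \<pi> i * x i) = 0"
  shows "(\<Sum>i\<in>I. \<pi> i * (exp (x i) + exp (- x i) - 2)) / 2
    \<le> exp_mean_difference \<pi> I x + exp_mean_difference \<pi> I (\<lambda>i. - x i)"
proof -
  consider "sum \<pi> {j\<in>I. x j \<le> 0} < 1/4" | "sum \<pi> {j\<in>I. 0 \<le> x j} < 1/4"
    | "1/4 \<le> sum \<pi> {j\<in>I. x j \<le> 0}" "1/4 \<le> sum \<pi> {j\<in>I. 0 \<le> x j}" by linarith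
  then show ?thesis
  proof cases
    case 1
    then show ?thesis using centred_exp_deviation_le_skewed[OF fin] \<pi> total centred by blast
  next
    case 2
    have "(\<Sum>i\<in>I. \<pi> i * - x i) = 0" using centred by (simp add: sum_negf)
    from centred_exp_deviation_le_skewed[where \<pi> = \<pi>, OF fin \<pi> total this] 2
    show ?thesis by (simp add: add.commute)
  next
    case 3
    define A where "A = (\<Sum>i\<in>{i\<in>I. 0 < x i}. \<pi> i * (exp (x i) - 1))"
    define B where "B = (\<Sum>i\<in>{i\<in>I. x i < 0}. \<pi> i * (exp (- x i) - 1))"
    have "0 \<le> A" "0 \<le> B" unfolding A_def B_def using \<pi> by (auto intro!: sum_nonneg)
    have "2 * sum \<pi> {j\<in>I. x j \<le> 0} * A \<le> exp_mean_difference \<pi> I x"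
      using exp_mean_difference_ge[where \<pi> = \<pi> and x = x and t = 0, OF fin \<pi>] unfolding A_def by simp
    moreover have "2 * sum \<pi> {j\<in>I. 0 \<le> x j} * B \<le> exp_mean_difference \<pi> I (\<lambda>i. - x i)"
      using exp_mean_difference_ge[where \<pi> = \<pi> and x = "\<lambda>i. - x i" and t = 0, OF fin \<pi>]
      unfolding B_def by (simp add: neg_less_0_iff_less)
    moreover have "1/4 * A \<le> sum \<pi> {j\<in>I. x j \<le> 0} * A" "1/4 * B \<le> sum \<pi> {j\<in>I. 0 \<le> x j} * B"
      using mult_right_mono[OF 3(1) \<open>0 \<le> A\<close>] mult_right_mono[OF 3(2) \<open>0 \<le> B\<close>] by auto
    moreover have "(\<Sum>i\<in>I. \<pi> i * (exp (x i) + exp (- x i) - 2)) \<le> A + B"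
      unfolding A_def B_def by (rule sum_exp_plus_exp_minus_le_parts[OF fin \<pi>])
    ultimately show ?thesis by argo
  qed
qed

section \<open>The potential after one ball\<close>

lemma sum_list_map_sort:
  fixes f :: "'a::linorder \<Rightarrow> 'b::comm_monoid_add"
  shows "sum_list (map f (sort xs)) = sum_list (map f xs)"
proof -
  have "sum_mset (mset (map f (sort xs))) = sum_mset (mset (map f xs))" by simp
  then show ?thesis by (simp only: sum_mset_sum_list)
qed

lemma sum_list_concat_replicate:
  "sum_list (map f (concat (map (\<lambda>i. replicate (Nw i) (y i)) [0..<n]))) = (\<Sum>i<n. real (Nw i) * f (y i))"
  by (induction n) (auto simp: sum_list_replicate)

lemma Gamma_slot_vector:
  "Gamma a (slot_vector n Nw w)
    = (\<Sum>j<n. real (Nw j) * (exp (a * norm_value n Nw w j) + exp (- a * norm_value n Nw w j)))"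
proof -
  have "Gamma a ys = sum_list (map (\<lambda>y. exp (a * y) + exp (- a * y)) ys)" for ys
    unfolding Gamma_def Phi_def Psi_def by (induction ys) auto
  then show ?thesis
    unfolding slot_vector_def by (simp add: rev_map[symmetric] sum_list_map_sort sum_list_concat_replicate)
qed

lemma bin_weight_le_total:
  "j < n \<Longrightarrow> real (Nw j) \<le> real (total_bin_weight n Nw)"
  unfolding total_bin_weight_def by (simp only: of_nat_le_iff) (rule member_le_sum, auto)

definition value_shift :: "nat \<Rightarrow> (nat \<Rightarrow> nat) \<Rightarrow> nat \<Rightarrow> nat \<Rightarrow> real" where
  "value_shift n Nw k j = (if j = k then 1 / real (Nw j) else 0) - 1 / real (total_bin_weight n Nw)"

lemma norm_value_add_ball:
  assumes "k < n"
  shows "norm_value n Nw (add_ball w k x) j = norm_value n Nw w j + value_shift n Nw k j * x"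
proof -
  have "(\<Sum>i<n. add_ball w k x i) = (\<Sum>i<n. w i + (if i = k then x else 0))"
    unfolding add_ball_def by (intro sum.cong) auto
  also have "\<dots> = (\<Sum>i<n. w i) + x" using assms by (simp add: sum.distrib)
  finally show ?thesis
    unfolding norm_value_def bin_value_def value_shift_def
    by (simp add: add_ball_def add_divide_distrib algebra_simps)
qed

lemma abs_value_shift_le:
  assumes "\<forall>i<n. 0 < Nw i" and "j < n"
  shows "\<bar>value_shift n Nw k j\<bar> \<le> 1"
proof -
  have "1 \<le> real (Nw j)" using assms by (simp add: Suc_le_eq)
  moreover have "real (Nw j) \<le> real (total_bin_weight n Nw)" using assms(2) by (rule bin_weight_le_total)
  moreover define u v where "u = 1 / real (total_bin_weight n Nw)" and "v = 1 / real (Nw j)"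
  ultimately have "0 \<le> u" "u \<le> v" "v \<le> 1" by (auto simp: frac_le)
  moreover have "value_shift n Nw k j = (if j = k then v else 0) - u"
    unfolding value_shift_def u_def v_def by simp
  ultimately show ?thesis by (auto simp: abs_le_iff)
qed

lemma abs_scaled_value_shift_le:
  assumes "\<forall>i<n. 0 < Nw i" and "j < n" and "0 \<le> a"
  shows "\<bar>a * value_shift n Nw k j\<bar> \<le> a"
  using abs_value_shift_le[OF assms(1,2), of k] assms(3) by (simp add: abs_mult mult_left_le)

lemma Gamma_slot_vector_add_ball:
  assumes "k < n"
  shows "Gamma a (slot_vector n Nw (add_ball w k x))
    = (\<Sum>j<n. real (Nw j) * (exp (a * norm_value n Nw w j) * exp (a * value_shift n Nw k j * x)
        + exp (- a * norm_value n Nw w j) * exp (- (a * value_shift n Nw k j) * x)))"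
  unfolding Gamma_slot_vector norm_value_add_ball[OF assms]
  by (simp add: ring_distribs mult.assoc flip: exp_add)

lemma integral_Gamma_add_ball:
  assumes W: "weight_dist W lam S" and a: "0 < a" "a \<le> lam / 2"
    and "k < n" and Nw: "\<forall>i<n. 0 < Nw i"
  shows "(\<integral>x. Gamma a (slot_vector n Nw (add_ball w k x)) \<partial>W)
    = (\<Sum>j<n. real (Nw j) * (exp (a * norm_value n Nw w j) * mgf W (a * value_shift n Nw k j)
        + exp (- a * norm_value n Nw w j) * mgf W (- (a * value_shift n Nw k j))))"
proof -
  have integrable: "integrable W (\<lambda>x. exp (a * value_shift n Nw k j * x))"
    "integrable W (\<lambda>x. exp (- (a * value_shift n Nw k j) * x))" if "j < n" for j
  proof -
    have "\<bar>a * value_shift n Nw k j\<bar> \<le> a"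
      using Nw \<open>j < n\<close> a by (intro abs_scaled_value_shift_le) auto
    then have "a * value_shift n Nw k j \<le> 3 * lam / 4" "- (a * value_shift n Nw k j) \<le> 3 * lam / 4"
      using a by (simp_all only: abs_le_iff) linarith+
    then show "integrable W (\<lambda>x. exp (a * value_shift n Nw k j * x))"
      "integrable W (\<lambda>x. exp (- (a * value_shift n Nw k j) * x))"
      using integrable_power_exp[where k = 0 and s = "a * value_shift n Nw k j", OF W]
        integrable_power_exp[where k = 0 and s = "- (a * value_shift n Nw k j)", OF W]
      by simp_all
  qed
  show ?thesis
    unfolding Gamma_slot_vector_add_ball[OF \<open>k < n\<close>] mgf_def
    by (subst Bochner_Integration.integral_sum) (use integrable in \<open>auto intro!: sum.cong\<close>)
qed

lemma shifted_bin_contribution_le: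
  fixes e f Nj N a S :: real and b :: bool
  assumes "0 \<le> e" "0 \<le> f" "1 \<le> Nj" "Nj \<le> N" "0 < a" "0 \<le> S"
  defines "c \<equiv> a * ((if b then 1 / Nj else 0) - 1 / N)"
  shows "Nj * (e * (1 + c + S * c\<^sup>2) + f * (1 + - c + S * (- c)\<^sup>2))
    \<le> Nj * (e + f) - a / N * (Nj * (e - f)) + S * a\<^sup>2 / N\<^sup>2 * (Nj * (e + f))
       + (if b then a * (e - f) + S * a\<^sup>2 * (e + f) else 0)"
proof -
  have "0 < N" using assms by simp
  have expand: "Nj * (e * (1 + c + S * c\<^sup>2) + f * (1 + - c + S * (- c)\<^sup>2))
      = Nj * (e + f) + Nj * c * (e - f) + S * (Nj * c\<^sup>2) * (e + f)"
    by (simp add: power2_eq_square algebra_simps)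
  show ?thesis
  proof (cases b)
    case False
    then show ?thesis unfolding expand c_def using \<open>0 < N\<close> by (simp add: power2_eq_square field_simps)
  next
    case True
    then have c: "c = a / Nj - a / N" unfolding c_def by (simp add: algebra_simps)
    have "0 \<le> c" "c \<le> a / Nj"
      unfolding c using assms \<open>0 < N\<close> by (auto simp: field_simps intro: mult_left_mono)
    then have "Nj * c\<^sup>2 \<le> Nj * (a / Nj)\<^sup>2"
      using assms by (intro mult_left_mono power_mono) auto
    also have "\<dots> \<le> a\<^sup>2"
      using assms by (simp add: power2_eq_square field_simps)
    finally have "S * (Nj * c\<^sup>2) * (e + f) \<le> S * a\<^sup>2 * (e + f)"
      using assms by (intro mult_right_mono mult_left_mono) auto
    moreover have "Nj * c * (e - f) = a * (e - f) - a / N * (Nj * (e - f))"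
      unfolding c using assms by (simp add: field_simps)
    moreover have "0 \<le> S * a\<^sup>2 / N\<^sup>2 * (Nj * (e + f))" using assms by simp
    ultimately show ?thesis unfolding expand using True by simp
  qed
qed

lemma integral_Gamma_add_ball_le:
  fixes w :: "nat \<Rightarrow> real"
  assumes W: "weight_dist W lam S" and "0 \<le> S" and a: "0 < a" "a \<le> lam / 2"
    and "k < n" and Nw: "\<forall>i<n. 0 < Nw i"
  defines "N \<equiv> real (total_bin_weight n Nw)"
    and "e \<equiv> \<lambda>j. exp (a * norm_value n Nw w j)" and "f \<equiv> \<lambda>j. exp (- a * norm_value n Nw w j)"
  shows "(\<integral>x. Gamma a (slot_vector n Nw (add_ball w k x)) \<partial>W)
    \<le> (\<Sum>j<n. real (Nw j) * (e j + f j)) - a / N * (\<Sum>j<n. real (Nw j) * (e j - f j))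
       + S * a\<^sup>2 / N\<^sup>2 * (\<Sum>j<n. real (Nw j) * (e j + f j)) + (a * (e k - f k) + S * a\<^sup>2 * (e k + f k))"
proof -
  have "real (Nw j) * (e j * mgf W (a * value_shift n Nw k j) + f j * mgf W (- (a * value_shift n Nw k j)))
      \<le> real (Nw j) * (e j + f j) - a / N * (real (Nw j) * (e j - f j)) + S * a\<^sup>2 / N\<^sup>2 * (real (Nw j) * (e j + f j))
        + (if j = k then a * (e j - f j) + S * a\<^sup>2 * (e j + f j) else 0)"
    if "j < n" for j
  proof -
    have "\<bar>a * value_shift n Nw k j\<bar> \<le> lam / 2"
      using abs_scaled_value_shift_le[OF Nw \<open>j < n\<close>, of a k] a by simp
    then have "mgf W (a * value_shift n Nw k j) \<le> 1 + a * value_shift n Nw k j + S * (a * value_shift n Nw k j)\<^sup>2"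
      "mgf W (- (a * value_shift n Nw k j)) \<le> 1 + - (a * value_shift n Nw k j) + S * (- (a * value_shift n Nw k j))\<^sup>2"
      using mgf_le_quadratic[OF W, of "a * value_shift n Nw k j"]
        mgf_le_quadratic[OF W, of "- (a * value_shift n Nw k j)"] by simp_all
    then have "real (Nw j) * (e j * mgf W (a * value_shift n Nw k j) + f j * mgf W (- (a * value_shift n Nw k j)))
      \<le> real (Nw j) * (e j * (1 + a * value_shift n Nw k j + S * (a * value_shift n Nw k j)\<^sup>2)
        + f j * (1 + - (a * value_shift n Nw k j) + S * (- (a * value_shift n Nw k j))\<^sup>2))"
      unfolding e_def f_def by (intro mult_left_mono add_mono) auto
    also have "\<dots> \<le> real (Nw j) * (e j + f j) - a / N * (real (Nw j) * (e j - f j))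
        + S * a\<^sup>2 / N\<^sup>2 * (real (Nw j) * (e j + f j)) + (if j = k then a * (e j - f j) + S * a\<^sup>2 * (e j + f j) else 0)"
      unfolding value_shift_def N_def using Nw \<open>j < n\<close> bin_weight_le_total[OF \<open>j < n\<close>] a \<open>0 \<le> S\<close>
      by (intro shifted_bin_contribution_le) (auto simp: e_def f_def Suc_le_eq)
    finally show ?thesis .
  qed
  then have "(\<integral>x. Gamma a (slot_vector n Nw (add_ball w k x)) \<partial>W)
      \<le> (\<Sum>j<n. real (Nw j) * (e j + f j) - a / N * (real (Nw j) * (e j - f j))
        + S * a\<^sup>2 / N\<^sup>2 * (real (Nw j) * (e j + f j)) + (if j = k then a * (e j - f j) + S * a\<^sup>2 * (e j + f j) else 0))"
    unfolding integral_Gamma_add_ball[OF W a \<open>k < n\<close> Nw] e_def f_def by (intro sum_mono) auto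
  also have "\<dots> = (\<Sum>j<n. real (Nw j) * (e j + f j)) - a / N * (\<Sum>j<n. real (Nw j) * (e j - f j))
      + S * a\<^sup>2 / N\<^sup>2 * (\<Sum>j<n. real (Nw j) * (e j + f j)) + (a * (e k - f k) + S * a\<^sup>2 * (e k + f k))"
    using \<open>k < n\<close> by (simp add: sum.distrib sum_subtractf sum_distrib_left)
  finally show ?thesis .
qed

section \<open>Two choices under a biased distribution\<close>

lemma chosen_bin_cases: "chosen_bin Nw w tb i j = i \<or> chosen_bin Nw w tb i j = j"
  unfolding chosen_bin_def by auto

lemma mono_chosen_bin:
  fixes G :: "real \<Rightarrow> real"
  assumes "mono G"
  shows "G (bin_value Nw w (chosen_bin Nw w tb i j)) = min (G (bin_value Nw w i)) (G (bin_value Nw w j))"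
  using monoD[OF assms, of "bin_value Nw w i" "bin_value Nw w j"] monoD[OF assms, of "bin_value Nw w j" "bin_value Nw w i"]
  unfolding chosen_bin_def by (auto simp: min_def)

lemma double_sum_prob_const:
  fixes p :: "'i \<Rightarrow> real"
  assumes "sum p I = 1"
  shows "(\<Sum>i\<in>I. \<Sum>j\<in>I. p i * p j * K) = K"
proof -
  have "(\<Sum>i\<in>I. \<Sum>j\<in>I. p i * p j * K) = (\<Sum>i\<in>I. p i * K * sum p I)"
    by (simp add: sum_distrib_left sum_distrib_right mult_ac)
  then show ?thesis using assms by (simp flip: sum_distrib_right)
qed

lemma double_sum_prob_add:
  fixes p g :: "'i \<Rightarrow> real"
  assumes "sum p I = 1"
  shows "(\<Sum>i\<in>I. \<Sum>j\<in>I. p i * p j * (g i + g j)) = 2 * (\<Sum>i\<in>I. p i * g i)"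
proof -
  have "(\<Sum>i\<in>I. \<Sum>j\<in>I. p i * p j * g i) = (\<Sum>i\<in>I. p i * g i)"
    using assms by (simp add: mult_ac flip: sum_distrib_left sum_distrib_right)
  moreover have "(\<Sum>i\<in>I. \<Sum>j\<in>I. p i * p j * g j) = (\<Sum>j\<in>I. p j * g j)"
    using assms by (simp add: mult.assoc flip: sum_distrib_left sum_distrib_right)
  ultimately show ?thesis by (simp add: distrib_left sum.distrib)
qed

lemma two_choice_expectation:
  fixes G :: "real \<Rightarrow> real" and p w :: "nat \<Rightarrow> real" and Nw :: "nat \<Rightarrow> nat"
  assumes "mono G" and "sum p I = 1"
  defines "g \<equiv> \<lambda>i. G (bin_value Nw w i)"
  shows "(\<Sum>i\<in>I. \<Sum>j\<in>I. p i * p j * g (chosen_bin Nw w tb i j))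
    = (\<Sum>i\<in>I. p i * g i) - 1/2 * (\<Sum>i\<in>I. \<Sum>j\<in>I. p i * p j * \<bar>g i - g j\<bar>)"
proof -
  have "min u v = (u + v) / 2 - \<bar>u - v\<bar> / 2" for u v :: real
    by (simp add: min_def abs_if field_simps)
  then have chosen: "g (chosen_bin Nw w tb i j) = (g i + g j) / 2 - \<bar>g i - g j\<bar> / 2" for i j
    unfolding g_def mono_chosen_bin[OF \<open>mono G\<close>] by simp
  have "(\<Sum>i\<in>I. \<Sum>j\<in>I. p i * p j * g (chosen_bin Nw w tb i j))
      = (\<Sum>i\<in>I. \<Sum>j\<in>I. 1/2 * (p i * p j * (g i + g j)) - 1/2 * (p i * p j * \<bar>g i - g j\<bar>))"
    unfolding chosen by (intro sum.cong refl) (simp add: field_simps)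
  also have "\<dots> = 1/2 * (\<Sum>i\<in>I. \<Sum>j\<in>I. p i * p j * (g i + g j))
      - 1/2 * (\<Sum>i\<in>I. \<Sum>j\<in>I. p i * p j * \<bar>g i - g j\<bar>)"
    by (simp only: sum_subtractf sum_distrib_left)
  finally have "(\<Sum>i\<in>I. \<Sum>j\<in>I. p i * p j * g (chosen_bin Nw w tb i j))
      = 1/2 * (\<Sum>i\<in>I. \<Sum>j\<in>I. p i * p j * (g i + g j))
        - 1/2 * (\<Sum>i\<in>I. \<Sum>j\<in>I. p i * p j * \<bar>g i - g j\<bar>)" .
  then show ?thesis using double_sum_prob_add[OF \<open>sum p I = 1\<close>, of g] by simp
qed

lemma two_choice_expectation_exp_diff:
  fixes p w :: "nat \<Rightarrow> real" and Nw :: "nat \<Rightarrow> nat" and n :: nat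
  assumes "0 \<le> a" and "sum p I = 1"
  defines "g \<equiv> \<lambda>j. exp (a * norm_value n Nw w j) - exp (- a * norm_value n Nw w j)"
  shows "(\<Sum>i\<in>I. \<Sum>j\<in>I. p i * p j * g (chosen_bin Nw w tb i j))
    = (\<Sum>i\<in>I. p i * g i) - 1/2 * (\<Sum>i\<in>I. \<Sum>j\<in>I. p i * p j * \<bar>g i - g j\<bar>)"
proof -
  define c where "c = (\<Sum>k<n. w k) / real (total_bin_weight n Nw)"
  define G where "G v = exp (a * (v - c)) - exp (- a * (v - c))" for v
  have "mono G"
    unfolding G_def using \<open>0 \<le> a\<close> by (intro monoI diff_mono) (auto simp: mult_left_mono)
  moreover have "g = (\<lambda>j. G (bin_value Nw w j))"
    unfolding g_def G_def c_def norm_value_def by simp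
  ultimately show ?thesis using two_choice_expectation[OF _ \<open>sum p I = 1\<close>] by simp
qed

lemma two_choice_le_twice:
  fixes c p :: "nat \<Rightarrow> real"
  assumes "\<And>i. i \<in> I \<Longrightarrow> 0 \<le> p i" and "\<And>i. 0 \<le> c i" and "sum p I = 1"
  shows "(\<Sum>i\<in>I. \<Sum>j\<in>I. p i * p j * c (chosen_bin Nw w tb i j)) \<le> 2 * (\<Sum>i\<in>I. p i * c i)"
proof -
  have "c (chosen_bin Nw w tb i j) \<le> c i + c j" for i j
    using chosen_bin_cases[of Nw w tb i j] assms(2)[of i] assms(2)[of j] by auto
  then have "(\<Sum>i\<in>I. \<Sum>j\<in>I. p i * p j * c (chosen_bin Nw w tb i j))
      \<le> (\<Sum>i\<in>I. \<Sum>j\<in>I. p i * p j * (c i + c j))"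
    using assms(1) by (intro sum_mono mult_left_mono) auto
  then show ?thesis unfolding double_sum_prob_add[OF \<open>sum p I = 1\<close>] .
qed

lemma weighted_mean_perturbation_le:
  fixes p \<pi> g :: "'i \<Rightarrow> real"
  assumes "sum p I = 1" and "sum \<pi> I = 1" and \<pi>: "\<And>i. i \<in> I \<Longrightarrow> 0 \<le> \<pi> i"
    and close: "\<And>i. i \<in> I \<Longrightarrow> \<bar>p i - \<pi> i\<bar> \<le> \<epsilon> * \<pi> i"
  shows "(\<Sum>i\<in>I. p i * g i) - (\<Sum>i\<in>I. \<pi> i * g i) \<le> \<epsilon> * (\<Sum>i\<in>I. \<Sum>j\<in>I. \<pi> i * \<pi> j * \<bar>g i - g j\<bar>)"
proof -
  have "(\<Sum>i\<in>I. (p i - \<pi> i) * (g i - g j))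
      = (\<Sum>i\<in>I. p i * g i) - (\<Sum>i\<in>I. \<pi> i * g i) - g j * (sum p I - sum \<pi> I)" for j
    by (simp add: algebra_simps sum_subtractf sum.distrib sum_distrib_left)
  then have "(\<Sum>j\<in>I. \<pi> j * (\<Sum>i\<in>I. (p i - \<pi> i) * (g i - g j)))
      = (\<Sum>i\<in>I. p i * g i) - (\<Sum>i\<in>I. \<pi> i * g i)"
    using assms(1,2) by (simp flip: sum_distrib_right)
  then have "(\<Sum>i\<in>I. p i * g i) - (\<Sum>i\<in>I. \<pi> i * g i)
      = (\<Sum>j\<in>I. \<pi> j * (\<Sum>i\<in>I. (p i - \<pi> i) * (g i - g j)))" ..
  also have "\<dots> \<le> (\<Sum>j\<in>I. \<pi> j * (\<Sum>i\<in>I. \<epsilon> * \<pi> i * \<bar>g i - g j\<bar>))"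
  proof (intro sum_mono mult_left_mono)
    fix i j assume "i \<in> I"
    have "(p i - \<pi> i) * (g i - g j) \<le> \<bar>p i - \<pi> i\<bar> * \<bar>g i - g j\<bar>"
      by (metis abs_ge_self abs_mult)
    also have "\<dots> \<le> \<epsilon> * \<pi> i * \<bar>g i - g j\<bar>"
      using close[OF \<open>i \<in> I\<close>] by (rule mult_right_mono) simp
    finally show "(p i - \<pi> i) * (g i - g j) \<le> \<epsilon> * \<pi> i * \<bar>g i - g j\<bar>" .
  qed (use \<pi> in auto)
  also have "\<dots> = \<epsilon> * (\<Sum>i\<in>I. \<Sum>j\<in>I. \<pi> i * \<pi> j * \<bar>g i - g j\<bar>)"
    by (subst sum.swap) (simp add: sum_distrib_left mult_ac abs_minus_commute)
  finally show ?thesis .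
qed

definition bin_share :: "nat \<Rightarrow> (nat \<Rightarrow> nat) \<Rightarrow> nat \<Rightarrow> real" where
  "bin_share n Nw i = real (Nw i) / real (total_bin_weight n Nw)"

lemma bin_share_nonneg: "0 \<le> bin_share n Nw i"
  unfolding bin_share_def by simp

lemma sum_bin_share:
  assumes "\<forall>i<n. 0 < Nw i" and "0 < n"
  shows "(\<Sum>i<n. bin_share n Nw i) = 1"
proof -
  have "0 < (\<Sum>i<n. real (Nw i))"
    using assms by (intro sum_pos2[of _ 0]) auto
  then show ?thesis
    unfolding bin_share_def total_bin_weight_def by (simp flip: sum_divide_distrib)
qed

lemma biased_share_bounds:
  assumes "biased n Nw p \<alpha> \<beta>" and "0 < \<alpha>" and "i < n"
  shows "bin_share n Nw i / \<alpha> \<le> p i" and "p i \<le> \<beta> * bin_share n Nw i"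
  using assms unfolding biased_def bin_share_def by (auto simp: field_simps)

lemma biased_close_to_share:
  assumes "biased n Nw p \<alpha> \<beta>" and "0 < \<alpha>" and "4/5 \<le> 1 / \<alpha>\<^sup>2" and "\<beta>\<^sup>2 \<le> 4/3" and "i < n"
  shows "\<bar>p i - bin_share n Nw i\<bar> \<le> 1/6 * bin_share n Nw i"
proof -
  have "(5/6)\<^sup>2 < (1 / \<alpha>)\<^sup>2" using assms(3) by (simp add: power_divide)
  then have "5/6 \<le> 1 / \<alpha>"
    using power_less_imp_less_base[of "5/6" 2 "1 / \<alpha>"] \<open>0 < \<alpha>\<close> by simp
  have "\<beta>\<^sup>2 < (7/6)\<^sup>2" using assms(4) by (simp add: power2_eq_square)
  then have "\<beta> \<le> 7/6"
    using power_less_imp_less_base[of "\<bar>\<beta>\<bar>" 2 "7/6"] by simp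
  have "5/6 * bin_share n Nw i \<le> bin_share n Nw i / \<alpha>"
    using mult_right_mono[OF \<open>5/6 \<le> 1 / \<alpha>\<close> bin_share_nonneg] by simp
  moreover have "\<beta> * bin_share n Nw i \<le> 7/6 * bin_share n Nw i"
    using \<open>\<beta> \<le> 7/6\<close> bin_share_nonneg by (rule mult_right_mono)
  ultimately show ?thesis
    using biased_share_bounds[OF assms(1,2,5)] unfolding abs_le_iff by linarith
qed

lemma biased_pair_lower:
  assumes "biased n Nw p \<alpha> \<beta>" and "0 < \<alpha>" and "4/5 \<le> 1 / \<alpha>\<^sup>2" and "i < n" and "j < n"
  shows "4/5 * (bin_share n Nw i * bin_share n Nw j) \<le> p i * p j"
proof -
  have "4/5 * (bin_share n Nw i * bin_share n Nw j) \<le> 1 / \<alpha>\<^sup>2 * (bin_share n Nw i * bin_share n Nw j)"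
    using assms(3) by (rule mult_right_mono) (simp add: bin_share_nonneg)
  also have "\<dots> = (bin_share n Nw i / \<alpha>) * (bin_share n Nw j / \<alpha>)"
    by (simp add: power2_eq_square)
  also have "\<dots> \<le> p i * p j"
    using biased_share_bounds[OF assms(1,2)] assms(4,5) \<open>0 < \<alpha>\<close>
    by (intro mult_mono) (auto simp: bin_share_nonneg order_trans[OF _ biased_share_bounds(1)[OF assms(1,2)]])
  finally show ?thesis .
qed

lemma sum_bin_share_mult:
  "(\<Sum>i<n. bin_share n Nw i * h i) = (\<Sum>i<n. real (Nw i) * h i) / real (total_bin_weight n Nw)"
  unfolding bin_share_def by (simp add: sum_divide_distrib)

lemma biased_sum_le_share:
  assumes "biased n Nw p \<alpha> \<beta>" and "0 < \<alpha>" and "4/5 \<le> 1 / \<alpha>\<^sup>2" and "\<beta>\<^sup>2 \<le> 4/3"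
    and "\<And>i. 0 \<le> c i"
  shows "(\<Sum>i<n. p i * c i) \<le> 7/6 * (\<Sum>i<n. bin_share n Nw i * c i)"
proof -
  have "p i * c i \<le> 7/6 * (bin_share n Nw i * c i)" if "i < n" for i
  proof -
    have "p i \<le> 7/6 * bin_share n Nw i"
      using biased_close_to_share[OF assms(1-4) that] unfolding abs_le_iff by linarith
    then have "p i * c i \<le> (7/6 * bin_share n Nw i) * c i" using assms(5)[of i] by (rule mult_right_mono)
    then show ?thesis by (simp only: mult.assoc)
  qed
  then have "(\<Sum>i<n. p i * c i) \<le> (\<Sum>i<n. 7/6 * (bin_share n Nw i * c i))" by (intro sum_mono) auto
  then show ?thesis by (simp only: sum_distrib_left)
qed

lemma biased_mean_shift_le:
  assumes "\<forall>i<n. 0 < Nw i" and "is_bin_dist n p"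
    and "biased n Nw p \<alpha> \<beta>" and "0 < \<alpha>" and "4/5 \<le> 1 / \<alpha>\<^sup>2" and "\<beta>\<^sup>2 \<le> 4/3"
  shows "(\<Sum>i<n. p i * g i) - (\<Sum>i<n. bin_share n Nw i * g i)
    \<le> 1/6 * (\<Sum>i<n. \<Sum>j<n. bin_share n Nw i * bin_share n Nw j * \<bar>g i - g j\<bar>)"
proof (rule weighted_mean_perturbation_le)
  have "0 < n" using assms(2) by (cases n) (auto simp: is_bin_dist_def)
  then show "sum (bin_share n Nw) {..<n} = 1" using sum_bin_share[OF assms(1)] by simp
  show "sum p {..<n} = 1" using assms(2) by (simp add: is_bin_dist_def)
qed (use biased_close_to_share[OF assms(3-6)] bin_share_nonneg in auto)

lemma biased_mean_difference_ge:
  assumes "biased n Nw p \<alpha> \<beta>" and "0 < \<alpha>" and "4/5 \<le> 1 / \<alpha>\<^sup>2"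
  shows "4/5 * (\<Sum>i<n. \<Sum>j<n. bin_share n Nw i * bin_share n Nw j * \<bar>g i - g j\<bar>)
    \<le> (\<Sum>i<n. \<Sum>j<n. p i * p j * \<bar>g i - g j\<bar>)"
proof -
  have "4/5 * (\<Sum>i<n. \<Sum>j<n. bin_share n Nw i * bin_share n Nw j * \<bar>g i - g j\<bar>)
      = (\<Sum>i<n. \<Sum>j<n. 4/5 * (bin_share n Nw i * bin_share n Nw j) * \<bar>g i - g j\<bar>)"
    by (simp add: sum_distrib_left mult_ac)
  also have "\<dots> \<le> (\<Sum>i<n. \<Sum>j<n. p i * p j * \<bar>g i - g j\<bar>)"
    using biased_pair_lower[OF assms] by (intro sum_mono mult_right_mono) auto
  finally show ?thesis .
qed

lemma abs_sinh_diff_split: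
  fixes u v :: real
  shows "\<bar>(exp u - exp (- u)) - (exp v - exp (- v))\<bar> = \<bar>exp u - exp v\<bar> + \<bar>exp (- u) - exp (- v)\<bar>"
proof (cases "u \<le> v")
  case True
  then have "exp u \<le> exp v" "exp (- v) \<le> exp (- u)" by auto
  then show ?thesis by linarith
next
  case False
  then have "exp v \<le> exp u" "exp (- u) \<le> exp (- v)" by auto
  then show ?thesis by linarith
qed

lemma expected_next_Gamma_le:
  fixes w :: "nat \<Rightarrow> real"
  assumes Nw: "\<forall>i<n. 0 < Nw i" and p: "is_bin_dist n p"
    and W: "weight_dist W lam S" and "0 \<le> S" and a: "0 < a" "a \<le> lam / 2"
  defines "N \<equiv> real (total_bin_weight n Nw)"
    and "e \<equiv> \<lambda>j. exp (a * norm_value n Nw w j)" and "f \<equiv> \<lambda>j. exp (- a * norm_value n Nw w j)"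
  shows "expected_next_Gamma a n Nw p tb W w
    \<le> (\<Sum>j<n. real (Nw j) * (e j + f j)) - a / N * (\<Sum>j<n. real (Nw j) * (e j - f j))
       + S * a\<^sup>2 / N\<^sup>2 * (\<Sum>j<n. real (Nw j) * (e j + f j))
       + a * ((\<Sum>i<n. p i * (e i - f i)) - 1/2 * (\<Sum>i<n. \<Sum>j<n. p i * p j * \<bar>(e i - f i) - (e j - f j)\<bar>))
       + S * a\<^sup>2 * (2 * (\<Sum>i<n. p i * (e i + f i)))"
proof -
  define K where "K = (\<Sum>j<n. real (Nw j) * (e j + f j)) - a / N * (\<Sum>j<n. real (Nw j) * (e j - f j))
    + S * a\<^sup>2 / N\<^sup>2 * (\<Sum>j<n. real (Nw j) * (e j + f j))"
  define g where "g j = e j - f j" for j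
  define c where "c j = e j + f j" for j
  define ch where "ch i j = chosen_bin Nw w tb i j" for i j
  have p0: "\<And>i. i < n \<Longrightarrow> 0 \<le> p i" and p1: "sum p {..<n} = 1"
    using p unfolding is_bin_dist_def by auto
  have "expected_next_Gamma a n Nw p tb W w \<le> (\<Sum>i<n. \<Sum>j<n. p i * p j * (K + a * g (ch i j) + S * a\<^sup>2 * c (ch i j)))"
    unfolding expected_next_Gamma_def
  proof (intro sum_mono mult_left_mono)
    fix i j assume "i \<in> {..<n}" "j \<in> {..<n}"
    then have "ch i j < n" using chosen_bin_cases[of Nw w tb i j] unfolding ch_def by auto
    from integral_Gamma_add_ball_le[OF W \<open>0 \<le> S\<close> a this Nw, of w]
    show "(\<integral>x. Gamma a (slot_vector n Nw (add_ball w (chosen_bin Nw w tb i j) x)) \<partial>W)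
        \<le> K + a * g (ch i j) + S * a\<^sup>2 * c (ch i j)"
      unfolding K_def g_def c_def ch_def N_def e_def f_def by (simp add: algebra_simps)
    show "0 \<le> p i * p j" using p0 \<open>i \<in> {..<n}\<close> \<open>j \<in> {..<n}\<close> by simp
  qed
  also have "\<dots> = K + a * (\<Sum>i<n. \<Sum>j<n. p i * p j * g (ch i j)) + S * a\<^sup>2 * (\<Sum>i<n. \<Sum>j<n. p i * p j * c (ch i j))"
  proof -
    have "(\<Sum>i<n. \<Sum>j<n. p i * p j * (K + a * g (ch i j) + S * a\<^sup>2 * c (ch i j)))
        = (\<Sum>i<n. \<Sum>j<n. p i * p j * K) + a * (\<Sum>i<n. \<Sum>j<n. p i * p j * g (ch i j))
          + S * a\<^sup>2 * (\<Sum>i<n. \<Sum>j<n. p i * p j * c (ch i j))"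
      by (simp add: ring_distribs sum.distrib sum_distrib_left mult_ac)
    then show ?thesis unfolding double_sum_prob_const[OF p1] .
  qed
  also have "(\<Sum>i<n. \<Sum>j<n. p i * p j * g (ch i j))
      = (\<Sum>i<n. p i * g i) - 1/2 * (\<Sum>i<n. \<Sum>j<n. p i * p j * \<bar>g i - g j\<bar>)"
    using two_choice_expectation_exp_diff[of a p "{..<n}" n Nw w tb] a p1
    unfolding g_def e_def f_def ch_def by simp
  also have "S * a\<^sup>2 * (\<Sum>i<n. \<Sum>j<n. p i * p j * c (ch i j)) \<le> S * a\<^sup>2 * (2 * (\<Sum>i<n. p i * c i))"
    unfolding ch_def using p0 p1 \<open>0 \<le> S\<close>
    by (intro mult_left_mono two_choice_le_twice) (auto simp: c_def e_def f_def add_nonneg_nonneg)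
  finally show ?thesis unfolding K_def g_def c_def by simp
qed

lemma sum_share_norm_value:
  assumes Nw: "\<forall>i<n. 0 < Nw i" and "0 < n"
  shows "(\<Sum>i<n. bin_share n Nw i * norm_value n Nw w i) = 0"
proof -
  have "bin_share n Nw i * norm_value n Nw w i
      = w i / real (total_bin_weight n Nw) - bin_share n Nw i * ((\<Sum>k<n. w k) / real (total_bin_weight n Nw))"
    if "i < n" for i
  proof -
    have "real (Nw i) \<noteq> 0" using Nw that by simp
    then show ?thesis unfolding bin_share_def norm_value_def bin_value_def by (simp add: right_diff_distrib)
  qed
  then have "(\<Sum>i<n. bin_share n Nw i * norm_value n Nw w i)
      = (\<Sum>i<n. w i) / real (total_bin_weight n Nw)
        - (\<Sum>i<n. bin_share n Nw i) * ((\<Sum>k<n. w k) / real (total_bin_weight n Nw))"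
    by (simp add: sum_subtractf sum_divide_distrib sum_distrib_right)
  then show ?thesis using sum_bin_share[OF assms] by simp
qed

lemma Gamma_deviation_le_mean_difference:
  fixes w :: "nat \<Rightarrow> real" and a :: real
  assumes Nw: "\<forall>i<n. 0 < Nw i" and "0 < n"
  defines "N \<equiv> real (total_bin_weight n Nw)" and "\<pi> \<equiv> bin_share n Nw"
    and "e \<equiv> \<lambda>j. exp (a * norm_value n Nw w j)" and "f \<equiv> \<lambda>j. exp (- a * norm_value n Nw w j)"
  shows "((\<Sum>j<n. real (Nw j) * (e j + f j)) / N - 2) / 2
    \<le> (\<Sum>i<n. \<Sum>j<n. \<pi> i * \<pi> j * \<bar>(e i - f i) - (e j - f j)\<bar>)"
proof -
  define x where "x j = a * norm_value n Nw w j" for j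
  have "(\<Sum>i<n. \<pi> i * x i) = 0"
    using sum_share_norm_value[OF assms(1,2), of w]
    unfolding \<pi>_def x_def by (simp add: mult.left_commute flip: sum_distrib_left)
  then have "(\<Sum>i<n. \<pi> i * (exp (x i) + exp (- x i) - 2)) / 2
      \<le> exp_mean_difference \<pi> {..<n} x + exp_mean_difference \<pi> {..<n} (\<lambda>i. - x i)"
    using sum_bin_share[OF assms(1,2)] unfolding \<pi>_def
    by (intro centred_exp_deviation_le) (auto simp: bin_share_nonneg)
  moreover have "(\<Sum>i<n. \<pi> i * (exp (x i) + exp (- x i) - 2))
      = (\<Sum>i<n. \<pi> i * (exp (x i) + exp (- x i))) - 2 * (\<Sum>i<n. \<pi> i)"
    by (simp add: right_diff_distrib sum_subtractf sum_distrib_left mult.commute)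
  moreover have "(\<Sum>i<n. \<pi> i * (exp (x i) + exp (- x i))) = (\<Sum>j<n. real (Nw j) * (e j + f j)) / N"
    unfolding \<pi>_def x_def e_def f_def bin_share_def N_def by (simp add: sum_divide_distrib)
  moreover have "(\<Sum>i<n. \<pi> i) = 1" unfolding \<pi>_def using sum_bin_share[OF assms(1,2)] .
  moreover have "exp_mean_difference \<pi> {..<n} x + exp_mean_difference \<pi> {..<n} (\<lambda>i. - x i)
      = (\<Sum>i<n. \<Sum>j<n. \<pi> i * \<pi> j * \<bar>(e i - f i) - (e j - f j)\<bar>)"
    unfolding exp_mean_difference_def e_def f_def x_def
    by (simp add: abs_sinh_diff_split distrib_left sum.distrib)
  ultimately show ?thesis by simp
qed

lemma drift_arith:
  fixes G N a S D E :: real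
  assumes "0 \<le> G" "1 \<le> N" "0 < a" "0 \<le> S" "40 * S * a \<le> 1" and D: "(G / N - 2) / 2 \<le> D"
    and E: "E \<le> G + S * a\<^sup>2 / N\<^sup>2 * G + 7/3 * S * a\<^sup>2 * (G / N) - 7/30 * a * D"
  shows "E \<le> (1 - a / (60 * N)) * G + a"
proof -
  define u where "u = G / N"
  have "0 \<le> u" unfolding u_def using assms by simp
  have "S * a\<^sup>2 / N\<^sup>2 * G = S * a\<^sup>2 * (u / N)" unfolding u_def by (simp add: power2_eq_square)
  also have "\<dots> \<le> S * a\<^sup>2 * u"
    using assms \<open>0 \<le> u\<close> by (intro mult_left_mono) (auto simp: divide_le_eq mult_le_cancel_left1)
  finally have "S * a\<^sup>2 / N\<^sup>2 * G \<le> S * a\<^sup>2 * u" .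
  moreover have "S * a\<^sup>2 * u \<le> a * u / 40"
    using mult_right_mono[OF \<open>40 * S * a \<le> 1\<close>, of "a * u"] assms \<open>0 \<le> u\<close>
    by (simp add: power2_eq_square mult_ac)
  moreover have "a * u / 2 - a \<le> a * D"
    using mult_left_mono[OF D, of a] assms unfolding u_def by (simp add: algebra_simps)
  moreover have "7/3 * S * a\<^sup>2 * (G / N) = 7/3 * (S * a\<^sup>2 * u)" unfolding u_def by simp
  moreover have "(1 - a / (60 * N)) * G + a = G - a * u / 60 + a"
    unfolding u_def using assms by (simp add: field_simps)
  moreover have "0 \<le> a * u" using assms \<open>0 \<le> u\<close> by simp
  moreover have "7/30 * a * D = 7/30 * (a * D)" by simp
  ultimately show ?thesis using E \<open>0 < a\<close> by linarith
qed

lemma expected_next_Gamma_drift: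
  fixes w :: "nat \<Rightarrow> real"
  assumes Nw: "\<forall>i<n. 0 < Nw i" and p: "is_bin_dist n p" and bias: "biased n Nw p \<alpha> \<beta>"
    and \<alpha>: "0 < \<alpha>" "4/5 \<le> 1 / \<alpha>\<^sup>2" and \<beta>: "\<beta>\<^sup>2 \<le> 4/3"
    and W: "weight_dist W lam S" and "0 \<le> S" and a: "0 < a" "40 * S * a \<le> 1" "a \<le> lam / 2"
  shows "expected_next_Gamma a n Nw p tb W w
    \<le> (1 - a / (60 * real (total_bin_weight n Nw))) * Gamma a (slot_vector n Nw w) + a"
proof -
  have "0 < n" using p by (cases n) (auto simp: is_bin_dist_def)
  define N where "N = real (total_bin_weight n Nw)"
  define \<pi> where "\<pi> = bin_share n Nw"
  define e where "e j = exp (a * norm_value n Nw w j)" for j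
  define f where "f j = exp (- a * norm_value n Nw w j)" for j
  define G where "G = (\<Sum>j<n. real (Nw j) * (e j + f j))"
  define D where "D = (\<Sum>i<n. \<Sum>j<n. \<pi> i * \<pi> j * \<bar>(e i - f i) - (e j - f j)\<bar>)"
  define Q where "Q = (\<Sum>i<n. \<Sum>j<n. p i * p j * \<bar>(e i - f i) - (e j - f j)\<bar>)"
  have "1 \<le> N"
    using Nw bin_weight_le_total[OF \<open>0 < n\<close>, of Nw] \<open>0 < n\<close> unfolding N_def
    by (metis One_nat_def Suc_leI of_nat_1 of_nat_le_iff order_trans)
  have choice: "2 * (\<Sum>i<n. p i * (e i + f i)) \<le> 7/3 * (G / N)"
    using biased_sum_le_share[OF bias \<alpha> \<beta>, of "\<lambda>i. e i + f i"]
    unfolding G_def N_def sum_bin_share_mult by (simp add: e_def f_def add_nonneg_nonneg)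
  have mean: "(\<Sum>i<n. p i * (e i - f i)) - (\<Sum>j<n. real (Nw j) * (e j - f j)) / N \<le> 1/6 * D"
    using biased_mean_shift_le[OF Nw p bias \<alpha> \<beta>, of "\<lambda>i. e i - f i"]
    unfolding D_def N_def \<pi>_def sum_bin_share_mult .
  have "4/5 * D \<le> Q"
    unfolding D_def Q_def \<pi>_def by (rule biased_mean_difference_ge[OF bias \<alpha>(1,2)])
  have core: "(G / N - 2) / 2 \<le> D"
    unfolding G_def D_def N_def \<pi>_def e_def f_def by (rule Gamma_deviation_le_mean_difference[OF Nw \<open>0 < n\<close>])
  define GG Pg Pc where "GG = (\<Sum>j<n. real (Nw j) * (e j - f j))"
    and "Pg = (\<Sum>i<n. p i * (e i - f i))" and "Pc = (\<Sum>i<n. p i * (e i + f i))"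
  have "expected_next_Gamma a n Nw p tb W w
      \<le> G - a / N * GG + S * a\<^sup>2 / N\<^sup>2 * G + a * (Pg - 1/2 * Q) + S * a\<^sup>2 * (2 * Pc)"
    using expected_next_Gamma_le[OF Nw p W \<open>0 \<le> S\<close> a(1,3), of tb w]
    unfolding G_def GG_def Pg_def Pc_def Q_def N_def e_def f_def .
  also have "\<dots> = G + S * a\<^sup>2 / N\<^sup>2 * G + a * (Pg - GG / N) - 1/2 * (a * Q) + S * a\<^sup>2 * (2 * Pc)"
    by (simp add: algebra_simps)
  also have "\<dots> \<le> G + S * a\<^sup>2 / N\<^sup>2 * G + a * (1/6 * D) - 1/2 * (a * (4/5 * D)) + S * a\<^sup>2 * (7/3 * (G / N))"
    using mean choice \<open>4/5 * D \<le> Q\<close> a(1) \<open>0 \<le> S\<close>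
    unfolding GG_def Pg_def Pc_def by (intro add_mono diff_mono mult_left_mono) auto
  also have "\<dots> = G + S * a\<^sup>2 / N\<^sup>2 * G + 7/3 * S * a\<^sup>2 * (G / N) - 7/30 * a * D"
    by (simp add: algebra_simps)
  finally have "expected_next_Gamma a n Nw p tb W w
      \<le> G + S * a\<^sup>2 / N\<^sup>2 * G + 7/3 * S * a\<^sup>2 * (G / N) - 7/30 * a * D" .
  moreover have "0 \<le> G" unfolding G_def e_def f_def by (intro sum_nonneg) simp
  ultimately have "expected_next_Gamma a n Nw p tb W w \<le> (1 - a / (60 * N)) * G + a"
    using drift_arith \<open>1 \<le> N\<close> a(1,2) \<open>0 \<le> S\<close> core by blast
  then show ?thesis unfolding N_def G_def e_def f_def Gamma_slot_vector .
qed

lemma Gamma_nonneg: "0 \<le> Gamma a ys"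
  unfolding Gamma_def Phi_def Psi_def by (auto intro!: sum_list_nonneg add_nonneg_nonneg)

theorem mainTheorem15:
  fixes \<mu> :: real
  assumes "\<mu> > 0"
  shows "\<exists>C :: real \<Rightarrow> real. \<forall>S :: real. S \<ge> 1 \<longrightarrow>
    (\<exists>a0 > 0. \<forall>a :: real. 0 < a \<and> a \<le> a0 \<longrightarrow>
      (\<forall>(n :: nat) (Nw :: nat \<Rightarrow> nat) (p :: nat \<Rightarrow> real) (\<alpha> :: real) (\<beta> :: real)
          (W :: real measure) (lam :: real) (tb :: nat \<Rightarrow> nat \<Rightarrow> bool) (w :: nat \<Rightarrow> real).
        (\<forall>i<n. 0 < Nw i) \<and> \<alpha> \<ge> 1 \<and> \<beta> \<ge> 1 \<and>
        is_bin_dist n p \<and> biased n Nw p \<alpha> \<beta> \<and>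
        1 / \<alpha>\<^sup>2 \<ge> 4/5 + \<mu> \<and> \<beta>\<^sup>2 \<le> 4/3 - \<mu> \<and>
        weight_dist W lam S \<and> a \<le> lam / 2 \<and>
        (\<forall>i<n. 0 \<le> w i)
        \<longrightarrow> expected_next_Gamma a n Nw p tb W w
            \<le> (1 - min (\<mu> / 4) (1 / 60) * a / real (total_bin_weight n Nw))
                * Gamma a (slot_vector n Nw w) + C a))"
  \<comment> \<open>Take \<open>C a = a\<close> and \<open>a0 = 1 / (40 S)\<close>. The drift rate \<open>1/60\<close> holds for every \<open>\<mu> > 0\<close>;
    the margin \<open>\<mu>\<close> is only needed to get \<open>4/5 \<le> 1 / \<alpha>\<^sup>2\<close> and \<open>\<beta>\<^sup>2 \<le> 4/3\<close>.\<close>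
proof (intro exI[of _ "\<lambda>a. a"] allI impI, goal_cases)
  case (1 S)
  show ?case
  proof (intro exI[of _ "1 / (40 * S)"] conjI allI impI, goal_cases)
    case 1
    then show ?case using \<open>1 \<le> S\<close> by simp
  next
    case (2 a n Nw p \<alpha> \<beta> W lam tb w)
    define N where "N = real (total_bin_weight n Nw)"
    have "40 * S * a \<le> 1" using 2 \<open>1 \<le> S\<close> by (simp add: field_simps)
    then have "expected_next_Gamma a n Nw p tb W w \<le> (1 - a / (60 * N)) * Gamma a (slot_vector n Nw w) + a"
      unfolding N_def using 2 \<open>1 \<le> S\<close> \<open>\<mu> > 0\<close>
      by (intro expected_next_Gamma_drift[where \<alpha> = \<alpha> and \<beta> = \<beta> and lam = lam]) auto
    also have "(1 - a / (60 * N)) * Gamma a (slot_vector n Nw w)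
        \<le> (1 - min (\<mu> / 4) (1 / 60) * a / N) * Gamma a (slot_vector n Nw w)"
    proof (rule mult_right_mono[OF _ Gamma_nonneg])
      have "min (\<mu> / 4) (1 / 60) * a / N \<le> 1 / 60 * a / N"
        using 2 unfolding N_def by (intro divide_right_mono mult_right_mono) auto
      then show "1 - a / (60 * N) \<le> 1 - min (\<mu> / 4) (1 / 60) * a / N" by simp
    qed
    finally show ?case unfolding N_def by simp
  qed
qed

end
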